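(* Let $\tau_i$ be an HC task that switches to HC mode at time $t_i\le t$, and suppose $t-t_i<D_i-D_i^L$. Then no job of $\tau_i$ can generate a demand of $C_i^H$ time units in the interval $[0,t)$. Consequently, $\tau_i$ generates maximal demand during $[0,t)$ when its first job is released at time $0$ and all successive jobs are released as soon as possible (i.e. at times $kT_i$, $k=0,1,2,\dots$).
   Context: A mixed-criticality sporadic task is $\tau_i=(T_i,L_i,\{C_i^L,C_i^H\},D_i)$: jobs are released with minimum separation $T_i$, $L_i\in\{LC,HC\}$, $D_i\le T_i$ is the relative deadline, and $C_i^L<C_i^H$ for HC tasks. Each task has a tightened deadline $D_i^L\le D_i$. An HC task is in LC mode until the instant $t_i$ at which some job requests to execute for more than $C_i^L$; from then on it is in HC mode. While in LC mode, a job released at $r$ must receive $C_i^L$ time units by $r+D_i^L$; once the task is in HC mode, a job may require up to $C_i^H$ units in total, to be received by its actual deadline $r+D_i$ (in particular a job can require $C_i^H$ only if it has not completed its LC-mode obligation before $t_i$, i.e. $r+D_i^L\ge t_i$). The demand of a task during $[0,t)$ is the amount of execution that must be completed within $[0,t)$ in order to meet all of its deadlines that fall in $[0,t)$; execution with deadline after $t$ contributes no demand. "Maximal demand" is over all legal release sequences (minimum separation $T_i$) and all legal execution behaviours. *)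

theory Defs
  imports Main "HOL.Real"
begin

text \<open>An HC task tau_i with period T, relative deadline D, tightened deadline DL,
  budgets CL < CH.  Time is real-valued.  Finite release
  sequences are covered since later jobs may be released arbitrarily late.\<close>

definition legal_release :: "real \<Rightarrow> (nat \<Rightarrow> real) \<Rightarrow> bool" where
  "legal_release T r \<longleftrightarrow> 0 \<le> r 0 \<and> (\<forall>k. r k + T \<le> r (Suc k))"

text \<open>An execution behaviour c gives the total execution requested by each job.\<close>

definition legal_behaviour ::
  "real \<Rightarrow> real \<Rightarrow> real \<Rightarrow> real \<Rightarrow> (nat \<Rightarrow> real) \<Rightarrow> (nat \<Rightarrow> real) \<Rightarrow> bool" where
  "legal_behaviour DL CL CH ti r c \<longleftrightarrow>
     (\<forall>k. 0 \<le> c k \<and> c k \<le> CH \<and> (r k + DL < ti \<longrightarrow> c k \<le> CL))"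

definition job_demand ::
  "real \<Rightarrow> real \<Rightarrow> real \<Rightarrow> (nat \<Rightarrow> real) \<Rightarrow> (nat \<Rightarrow> real) \<Rightarrow> real \<Rightarrow> nat \<Rightarrow> real" where
  "job_demand D DL ti r c t k =
     (if r k + DL < ti then (if r k + DL \<le> t then c k else 0)
      else (if r k + D \<le> t then c k else 0))"

definition task_demand ::
  "real \<Rightarrow> real \<Rightarrow> real \<Rightarrow> (nat \<Rightarrow> real) \<Rightarrow> (nat \<Rightarrow> real) \<Rightarrow> real \<Rightarrow> real" where
  "task_demand D DL ti r c t = (\<Sum>k\<in>{k. r k < t}. job_demand D DL ti r c t k)"

end

theory Submission
  imports Defs
begin

text \<open>Since t - ti < D - DL, a job whose LC obligation ends at or after the switch
  (r k + DL \<ge> ti) has its HC deadline r k + D > t, so it contributes no demand in [0,t).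
  Only jobs that finish their LC obligation before ti contribute, each at most CL < CH.
  The demand is thus at most CL times the number of releases with r k + DL < ti, and since
  the k-th release is never earlier than k T, this number is largest for the synchronous
  release sequence k T in which every job requests exactly CL.\<close>

lemma legal_release_ge_multiple:
  assumes "legal_release T r"
  shows "real k * T \<le> r k"
proof (induction k)
  case 0
  then show ?case using assms by (simp add: legal_release_def)
next
  case (Suc k)
  have "r k + T \<le> r (Suc k)" using assms by (simp add: legal_release_def)
  then show ?case using Suc by (simp add: algebra_simps)
qed

lemma legal_release_multiples:
  assumes "0 \<le> T"
  shows "legal_release T (\<lambda>k. real k * T)"
  using assms by (simp add: legal_release_def algebra_simps)

lemma finite_multiples_less:
  assumes "0 < (T::real)"
  shows "finite {k. real k * T < x}"
proof (rule finite_subset)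
  show "{k. real k * T < x} \<subseteq> {..nat \<lceil>x / T\<rceil>}"
  proof
    fix k
    assume "k \<in> {k. real k * T < x}"
    then have "real k < x / T"
      using assms by (simp add: field_simps)
    then show "k \<in> {..nat \<lceil>x / T\<rceil>}"
      by simp linarith
  qed
qed simp

lemma finite_released_before:
  assumes "0 < T" and "legal_release T r"
  shows "finite {k. r k < x}"
proof (rule finite_subset)
  show "{k. r k < x} \<subseteq> {k. real k * T < x}"
    using legal_release_ge_multiple[OF assms(2)] by (auto intro: le_less_trans)
qed (rule finite_multiples_less[OF assms(1)])

lemma job_demand_short_window:
  assumes "ti \<le> t" and "t - ti < D - DL"
  shows "job_demand D DL ti r c t k = (if r k + DL < ti then c k else 0)"
  using assms by (auto simp: job_demand_def)

lemma job_demand_less_CH: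
  assumes "ti \<le> t" and "t - ti < D - DL"
    and "legal_behaviour DL CL CH ti r c" and "0 \<le> CL" and "CL < CH"
  shows "job_demand D DL ti r c t k < CH"
  using assms by (auto simp: job_demand_short_window legal_behaviour_def)

lemma task_demand_short_window:
  assumes "finite {k. r k < t}" and "0 \<le> DL" and "ti \<le> t" and "t - ti < D - DL"
  shows "task_demand D DL ti r c t = (\<Sum>k | r k + DL < ti. c k)"
proof -
  have "task_demand D DL ti r c t =
      (\<Sum>k\<in>{k. r k < t}. if k \<in> {k. r k + DL < ti} then c k else 0)"
    using assms by (simp add: task_demand_def job_demand_short_window)
  also have "\<dots> = (\<Sum>k\<in>{k. r k < t} \<inter> {k. r k + DL < ti}. c k)"
    by (rule sum.inter_restrict[symmetric, OF assms(1)])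
  also have "{k. r k < t} \<inter> {k. r k + DL < ti} = {k. r k + DL < ti}"
    using assms(2,3) by auto
  finally show ?thesis .
qed

lemma task_demand_le_synchronous:
  assumes "0 < T" and "0 \<le> DL" and "ti \<le> t" and "t - ti < D - DL" and "0 \<le> CL"
    and "legal_release T r" and "legal_behaviour DL CL CH ti r c"
  shows "task_demand D DL ti r c t \<le> task_demand D DL ti (\<lambda>k. real k * T) (\<lambda>_. CL) t"
proof -
  have early_jobs_sub: "{k. r k + DL < ti} \<subseteq> {k. real k * T + DL < ti}"
    using legal_release_ge_multiple[OF assms(6)] by (auto intro: le_less_trans add_right_mono)
  have finite_sync_early_jobs: "finite {k. real k * T + DL < ti}"
    using finite_multiples_less[OF assms(1), of "ti - DL"] by (simp add: less_diff_eq)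
  have "task_demand D DL ti r c t = (\<Sum>k | r k + DL < ti. c k)"
    using assms by (simp add: task_demand_short_window finite_released_before)
  also have "\<dots> \<le> (\<Sum>k | r k + DL < ti. CL)"
    using assms(7) by (intro sum_mono) (auto simp: legal_behaviour_def)
  also have "\<dots> \<le> (\<Sum>k | real k * T + DL < ti. CL)"
    using assms(5) by (intro sum_mono2[OF finite_sync_early_jobs early_jobs_sub])
  also have "\<dots> = task_demand D DL ti (\<lambda>k. real k * T) (\<lambda>_. CL) t"
    using assms by (simp add: task_demand_short_window finite_released_before
        legal_release_multiples)
  finally show ?thesis .
qed

theorem lemma2:
  fixes T D DL CL CH ti t :: real
  assumes "0 < T" and "0 < DL" and "DL \<le> D" and "D \<le> T"
    and "0 \<le> CL" and "CL < CH"
    and "0 \<le> ti" and "ti \<le> t" and "t - ti < D - DL"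
  shows "(\<forall>r c k. legal_release T r \<longrightarrow> legal_behaviour DL CL CH ti r c \<longrightarrow>
              job_demand D DL ti r c t k < CH)
      \<and> (\<exists>c0. legal_behaviour DL CL CH ti (\<lambda>k. real k * T) c0 \<and>
              (\<forall>r c. legal_release T r \<longrightarrow> legal_behaviour DL CL CH ti r c \<longrightarrow>
                 task_demand D DL ti r c t \<le> task_demand D DL ti (\<lambda>k. real k * T) c0 t))"
proof (intro conjI allI impI exI)
  show "job_demand D DL ti r c t k < CH" if "legal_behaviour DL CL CH ti r c" for r c k
    using job_demand_less_CH assms that by blast
  show "legal_behaviour DL CL CH ti (\<lambda>k. real k * T) (\<lambda>_. CL)"
    using assms by (simp add: legal_behaviour_def)
  show "task_demand D DL ti r c t \<le> task_demand D DL ti (\<lambda>k. real k * T) (\<lambda>_. CL) t"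
    if "legal_release T r" and "legal_behaviour DL CL CH ti r c" for r c
    using task_demand_le_synchronous assms that by simp
qed

end
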